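(* Let $G=(X,b,m,c)$ be a weighted graph with $c=0$, let $p\in[1,\infty)$ and fix $o\in X$. The following are equivalent: (i) $G$ is $p$-parabolic; (ii) for one (equivalently, every) compactification $Y$ of $X$ one has $\mathrm{cap}_{o,p}(\partial_YX)=0$; (iii) there is $f\in D^p$ with $\liminf_{x\to\infty}f(x)=\infty$; (iv) there is a metric $\sigma$ on $X$ which is $p$-intrinsic with respect to some finite measure, induces the discrete topology on $X$, and whose distance balls $B_{r,\sigma}(x)=\{y:\sigma(x,y)\le r\}$ are finite for all $x\in X$, $r\ge0$; (v) there exists a $p$-intrinsic alternative edge weight $w$ with respect to some finite measure such that all distance balls with respect to the path pseudometric $d_w$ are finite.
   Context: Weighted graph $G=(X,b,m,c)$: $X$ countably infinite; $b$ symmetric, nonnegative, zero on the diagonal, $\sum_yb(x,y)<\infty$; $m>0$; $c\ge0$; $x\sim y$ iff $b(x,y)>0$; $X$ connected. $\mathcal{E}_p(f)=\frac12\sum_{x,y}b(x,y)|f(x)-f(y)|^p+\sum_xc(x)|f(x)|^p$, $D^p=\{f:\mathcal{E}_p(f)<\infty\}$, $\|f\|_{o,p}=(\mathcal{E}_p(f)+|f(o)|^p)^{1/p}$. For finite $K$, $\mathrm{cap}_p(K)=\inf\{\mathcal{E}_p(\varphi):\varphi\text{ finitely supported},\varphi\ge1\text{ on }K\}$; $G$ is $p$-parabolic if all these vanish. A compactification of $X$ is a compact Hausdorff space $Y$ containing $X$ as a dense subset on which the induced topology is discrete; $\partial_YX=Y\setminus X$. For $V\subseteq X$, $\mathrm{cap}_{o,p}(V)=\inf\{\|u\|_{o,p}:u\in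 D^p,\ u\ge1\text{ on }V\}$ (infimum of the empty set is $\infty$), and for $A\subseteq Y$, $\mathrm{cap}_{o,p}(A)=\inf\{\mathrm{cap}_{o,p}(O\cap X):O\text{ open in }Y,\ A\subseteq O\}$. $\liminf_{x\to\infty}f(x)=\sup_{K\subseteq X\text{ finite}}\inf_{x\in X\setminus K}f(x)$. A nonnegative symmetric function $w$ on $X\times X$ is $p$-intrinsic with respect to a measure $\mu\colon X\to[0,\infty)$ if $\sum_{y\in X}b(x,y)w(x,y)^p\le\mu(x)$ for all $x$; $\mu$ is finite if $\sum_x\mu(x)<\infty$. An alternative edge weight is a symmetric $w\colon X\times X\to[0,\infty)$ with $w(x,y)>0$ whenever $x\sim y$. For a path or ray $\gamma=(x_i)$ (a ray being an infinite sequence of pairwise distinct vertices with $x_i\sim x_{i+1}$), $l_w(\gamma)=\sum_iw(x_i,x_{i+1})$, and $d_w(x,y)=\inf\{l_w(\gamma):\gamma\text{ a path or ray from }x\text{ to }y\}$. *)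

theory Defs
  imports "HOL-Analysis.Analysis"
begin

definition weighted_graph ::
  "('x \<Rightarrow> 'x \<Rightarrow> real) \<Rightarrow> ('x \<Rightarrow> real) \<Rightarrow> ('x \<Rightarrow> real) \<Rightarrow> bool" where
  "weighted_graph b m c \<longleftrightarrow>
     countable (UNIV :: 'x set) \<and> infinite (UNIV :: 'x set) \<and>
     (\<forall>x y. b x y = b y x) \<and> (\<forall>x y. b x y \<ge> 0) \<and> (\<forall>x. b x x = 0) \<and>
     (\<forall>x. (\<lambda>y. b x y) summable_on UNIV) \<and>
     (\<forall>x. m x > 0) \<and> (\<forall>x. c x \<ge> 0) \<and>
     (\<forall>x y. (\<lambda>u v. b u v > 0)\<^sup>*\<^sup>* x y)"

definition energy ::
  "('x \<Rightarrow> 'x \<Rightarrow> real) \<Rightarrow> ('x \<Rightarrow> real) \<Rightarrow> real \<Rightarrow> ('x \<Rightarrow> real) \<Rightarrow> ennreal" where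
  "energy b c p f =
     (\<Sum>\<^sub>\<infinity>(x, y)\<in>UNIV. ennreal (b x y * \<bar>f x - f y\<bar> powr p)) / 2
     + (\<Sum>\<^sub>\<infinity>x\<in>UNIV. ennreal (c x * \<bar>f x\<bar> powr p))"

definition Dp :: "('x \<Rightarrow> 'x \<Rightarrow> real) \<Rightarrow> ('x \<Rightarrow> real) \<Rightarrow> real \<Rightarrow> ('x \<Rightarrow> real) set" where
  "Dp b c p = {f. energy b c p f < \<infinity>}"

definition onorm ::
  "('x \<Rightarrow> 'x \<Rightarrow> real) \<Rightarrow> ('x \<Rightarrow> real) \<Rightarrow> real \<Rightarrow> 'x \<Rightarrow> ('x \<Rightarrow> real) \<Rightarrow> real" where
  "onorm b c p xo f = (enn2real (energy b c p f) + \<bar>f xo\<bar> powr p) powr (1 / p)"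

definition capp ::
  "('x \<Rightarrow> 'x \<Rightarrow> real) \<Rightarrow> ('x \<Rightarrow> real) \<Rightarrow> real \<Rightarrow> 'x set \<Rightarrow> ennreal" where
  "capp b c p K = (INF \<phi> \<in> {\<phi>. finite {x. \<phi> x \<noteq> 0} \<and> (\<forall>x\<in>K. \<phi> x \<ge> 1)}. energy b c p \<phi>)"

definition p_parabolic ::
  "('x \<Rightarrow> 'x \<Rightarrow> real) \<Rightarrow> ('x \<Rightarrow> real) \<Rightarrow> real \<Rightarrow> bool" where
  "p_parabolic b c p \<longleftrightarrow> (\<forall>K. finite K \<longrightarrow> capp b c p K = 0)"

text \<open>cap_{o,p} of a vertex set (infimum of the empty set is \<infinity>).\<close>
definition capo ::
  "('x \<Rightarrow> 'x \<Rightarrow> real) \<Rightarrow> ('x \<Rightarrow> real) \<Rightarrow> real \<Rightarrow> 'x \<Rightarrow> 'x set \<Rightarrow> ennreal" where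
  "capo b c p xo V =
     (INF u \<in> {u. u \<in> Dp b c p \<and> (\<forall>x\<in>V. u x \<ge> 1)}. ennreal (onorm b c p xo u))"

definition compactification :: "'y topology \<Rightarrow> ('x \<Rightarrow> 'y) \<Rightarrow> bool" where
  "compactification T \<iota> \<longleftrightarrow>
     compact_space T \<and> Hausdorff_space T \<and> inj \<iota> \<and> range \<iota> \<subseteq> topspace T \<and>
     T closure_of (range \<iota>) = topspace T \<and>
     subtopology T (range \<iota>) = discrete_topology (range \<iota>)"

definition boundary :: "'y topology \<Rightarrow> ('x \<Rightarrow> 'y) \<Rightarrow> 'y set" where
  "boundary T \<iota> = topspace T - range \<iota>"

definition capY ::
  "('x \<Rightarrow> 'x \<Rightarrow> real) \<Rightarrow> ('x \<Rightarrow> real) \<Rightarrow> real \<Rightarrow> 'x \<Rightarrow> 'y topology \<Rightarrow> ('x \<Rightarrow> 'y)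
     \<Rightarrow> 'y set \<Rightarrow> ennreal" where
  "capY b c p xo T \<iota> A = (INF U \<in> {U. openin T U \<and> A \<subseteq> U}. capo b c p xo (\<iota> -` U))"

definition liminf_inf :: "('x \<Rightarrow> real) \<Rightarrow> ereal" where
  "liminf_inf f = (SUP K \<in> {K. finite K}. INF x \<in> - K. ereal (f x))"

definition finite_measure_fn :: "('x \<Rightarrow> real) \<Rightarrow> bool" where
  "finite_measure_fn \<mu> \<longleftrightarrow> (\<forall>x. \<mu> x \<ge> 0) \<and> \<mu> summable_on UNIV"

definition p_intrinsic ::
  "('x \<Rightarrow> 'x \<Rightarrow> real) \<Rightarrow> real \<Rightarrow> ('x \<Rightarrow> 'x \<Rightarrow> real) \<Rightarrow> ('x \<Rightarrow> real) \<Rightarrow> bool" where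
  "p_intrinsic b p w \<mu> \<longleftrightarrow>
     (\<forall>x y. w x y \<ge> 0) \<and> (\<forall>x y. w x y = w y x) \<and>
     (\<forall>x. (\<Sum>\<^sub>\<infinity>y\<in>UNIV. ennreal (b x y * w x y powr p)) \<le> ennreal (\<mu> x))"

definition is_metric :: "('x \<Rightarrow> 'x \<Rightarrow> real) \<Rightarrow> bool" where
  "is_metric \<sigma> \<longleftrightarrow> (\<forall>x y. \<sigma> x y \<ge> 0) \<and> (\<forall>x y. \<sigma> x y = 0 \<longleftrightarrow> x = y) \<and>
     (\<forall>x y. \<sigma> x y = \<sigma> y x) \<and> (\<forall>x y z. \<sigma> x z \<le> \<sigma> x y + \<sigma> y z)"

definition induces_discrete :: "('x \<Rightarrow> 'x \<Rightarrow> real) \<Rightarrow> bool" where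
  "induces_discrete \<sigma> \<longleftrightarrow> (\<forall>x. \<exists>\<epsilon>>0. \<forall>y. \<sigma> x y < \<epsilon> \<longrightarrow> y = x)"

definition alt_edge_weight :: "('x \<Rightarrow> 'x \<Rightarrow> real) \<Rightarrow> ('x \<Rightarrow> 'x \<Rightarrow> real) \<Rightarrow> bool" where
  "alt_edge_weight b w \<longleftrightarrow> (\<forall>x y. w x y = w y x) \<and> (\<forall>x y. w x y \<ge> 0) \<and>
     (\<forall>x y. b x y > 0 \<longrightarrow> w x y > 0)"

definition is_path :: "('x \<Rightarrow> 'x \<Rightarrow> real) \<Rightarrow> 'x list \<Rightarrow> 'x \<Rightarrow> 'x \<Rightarrow> bool" where
  "is_path b \<gamma> x y \<longleftrightarrow> \<gamma> \<noteq> [] \<and> hd \<gamma> = x \<and> last \<gamma> = y \<and>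
     (\<forall>i. Suc i < length \<gamma> \<longrightarrow> b (\<gamma> ! i) (\<gamma> ! Suc i) > 0)"

definition path_length :: "('x \<Rightarrow> 'x \<Rightarrow> real) \<Rightarrow> 'x list \<Rightarrow> real" where
  "path_length w \<gamma> = (\<Sum>i<length \<gamma> - 1. w (\<gamma> ! i) (\<gamma> ! Suc i))"

definition path_dist :: "('x \<Rightarrow> 'x \<Rightarrow> real) \<Rightarrow> ('x \<Rightarrow> 'x \<Rightarrow> real) \<Rightarrow> 'x \<Rightarrow> 'x \<Rightarrow> real" where
  "path_dist b w x y = Inf {path_length w \<gamma> | \<gamma>. is_path b \<gamma> x y}"

end

theory Submission
  imports Defs
begin

text \<open>
  All conditions are compared with (iii), the existence of a function \<open>f\<close> of finite energy
  whose sublevel sets are finite. For such an \<open>f\<close> the cut-offs of \<open>2 - f / t\<close> are finitely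
  supported, equal \<open>1\<close> on a given finite set once \<open>t\<close> is large, and have energy at most
  \<open>t\<^sup>-\<^sup>p E(f)\<close>; so the graph is \<open>p\<close>-parabolic. Conversely, on a \<open>p\<close>-parabolic graph
  choose finitely supported \<open>\<phi>\<^sub>n \<ge> 1\<close> on the first \<open>n\<close> vertices with
  \<open>E(\<phi>\<^sub>n) \<le> 2\<^sup>-\<^sup>n (n + 1)\<^sup>-\<^sup>p\<close>. Then \<open>f = sup\<^sub>n n (1 - \<phi>\<^sub>n)\<close> satisfies
  \<open>\<bar>f x - f y\<bar>\<^sup>p \<le> \<Sum>\<^sub>n n\<^sup>p \<bar>\<phi>\<^sub>n x - \<phi>\<^sub>n y\<bar>\<^sup>p\<close>, so it has finite energy, and
  \<open>f \<ge> n\<close> off the support of \<open>\<phi>\<^sub>n\<close>.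

  From \<open>f\<close> one gets the metric \<open>\<sigma> x y = \<bar>f x - f y\<bar> + \<epsilon> x + \<epsilon> y\<close> (for \<open>x \<noteq> y\<close>): the
  \<open>\<epsilon>\<close>-terms make it discrete, and if \<open>\<epsilon>\<^sup>p\<close> is summable against the vertex degrees then
  \<open>\<Sum>\<^sub>x \<Sum>\<^sub>y b x y \<sigma>(x,y)\<^sup>p < \<infinity>\<close>, which is equivalent to \<open>\<sigma>\<close> being \<open>p\<close>-intrinsic with
  respect to a finite measure. A metric is dominated by its own path metric, which gives (v);
  and for an intrinsic weight \<open>w\<close> the distance \<open>d\<^sub>w(o, \<cdot>)\<close> changes by at most \<open>w\<close> along
  edges, so it is a function as in (iii).

  For a compactification, the traces on \<open>X\<close> of the open neighbourhoods of the boundary are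
  exactly the cofinite sets. So \<open>cap(\<partial>X) = 0\<close> yields functions \<open>u\<close> of small energy, with
  \<open>\<bar>u o\<bar>\<close> small and \<open>u \<ge> 1\<close> off a finite set. As the graph is connected, small energy
  keeps \<open>u\<close> close to \<open>u o\<close> on any given finite set, and \<open>2 - 2 u\<close> is then a test function
  as required for \<open>p\<close>-parabolicity.
\<close>

section \<open>Sums of nonnegative extended reals\<close>

text \<open>Through a coercion, the library's \<open>summable_on_ennreal\<close> is stated for
  \<open>ennreal_of_enat \<circ> f\<close> only.\<close>
lemma summable_on_ennreal_fun: "(f :: 'a \<Rightarrow> ennreal) summable_on A"
  by (simp add: nonneg_summable_on_complete)

lemma infsum_ennreal_eq_SUP:
  fixes f :: "'a \<Rightarrow> ennreal"
  shows "infsum f A = (SUP F\<in>{F. finite F \<and> F \<subseteq> A}. sum f F)"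
  by (rule nonneg_infsum_complete) simp

lemma infsum_cmult_right_ennreal:
  fixes f :: "'a \<Rightarrow> ennreal"
  shows "(\<Sum>\<^sub>\<infinity>x\<in>A. c * f x) = c * infsum f A"
  by (simp add: infsum_ennreal_eq_SUP sum_distrib_left SUP_mult_left_ennreal)

lemma infsum_mono_subset_ennreal:
  fixes f :: "'a \<Rightarrow> ennreal"
  assumes "A \<subseteq> B"
  shows "infsum f A \<le> infsum f B"
  using assms by (intro infsum_mono_neutral) (auto simp: summable_on_ennreal_fun)

lemma infsum_mono_ennreal:
  fixes f g :: "'a \<Rightarrow> ennreal"
  assumes "\<And>x. x \<in> A \<Longrightarrow> f x \<le> g x"
  shows "infsum f A \<le> infsum g A"
  using assms by (intro infsum_mono) (auto simp: summable_on_ennreal_fun)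

lemma infsum_ennreal_ge_member:
  fixes f :: "'a \<Rightarrow> ennreal"
  assumes "a \<in> A"
  shows "f a \<le> infsum f A"
  using infsum_mono_subset_ennreal[of "{a}" A f] assms by simp

lemma infsum_divide_ennreal:
  fixes f :: "'a \<Rightarrow> ennreal"
  shows "(\<Sum>\<^sub>\<infinity>x\<in>A. f x / c) = infsum f A / c"
  using infsum_cmult_right_ennreal[of "inverse c" f A]
  by (simp add: divide_ennreal_def mult.commute)

lemma sum_SUP_le_SUP_sum_ennreal:
  fixes f :: "'a \<Rightarrow> 'b \<Rightarrow> ennreal"
  assumes "finite G"
  shows "(\<Sum>x\<in>G. SUP H\<in>{H. finite H \<and> H \<subseteq> B}. \<Sum>y\<in>H. f x y)
         \<le> (SUP H\<in>{H. finite H \<and> H \<subseteq> B}. \<Sum>x\<in>G. \<Sum>y\<in>H. f x y)"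
  using assms
proof (induction G rule: finite_induct)
  case empty
  then show ?case by simp
next
  case (insert a G)
  let ?I = "{H. finite H \<and> H \<subseteq> B}"
  have directed: "\<exists>k\<in>?I. (\<Sum>y\<in>i. f a y) + (\<Sum>x\<in>G. \<Sum>y\<in>j. f x y)
      \<le> (\<Sum>y\<in>k. f a y) + (\<Sum>x\<in>G. \<Sum>y\<in>k. f x y)" if "i \<in> ?I" "j \<in> ?I" for i j
    using that by (intro bexI[of _ "i \<union> j"] add_mono sum_mono sum_mono2) auto
  have "(\<Sum>x\<in>insert a G. SUP H\<in>?I. \<Sum>y\<in>H. f x y)
        \<le> (SUP H\<in>?I. \<Sum>y\<in>H. f a y) + (SUP H\<in>?I. \<Sum>x\<in>G. \<Sum>y\<in>H. f x y)"
    using insert by (simp add: add_left_mono)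
  also have "\<dots> = (SUP H\<in>?I. (\<Sum>y\<in>H. f a y) + (\<Sum>x\<in>G. \<Sum>y\<in>H. f x y))"
    by (rule SUP_add_directed_ennreal[symmetric]) (rule directed)
  also have "\<dots> = (SUP H\<in>?I. \<Sum>x\<in>insert a G. \<Sum>y\<in>H. f x y)"
    using insert by simp
  finally show ?case .
qed

lemma infsum_Sigma_ennreal:
  fixes f :: "'a \<times> 'b \<Rightarrow> ennreal"
  shows "infsum f (A \<times> B) = (\<Sum>\<^sub>\<infinity>x\<in>A. \<Sum>\<^sub>\<infinity>y\<in>B. f (x, y))"
proof (rule antisym)
  show "infsum f (A \<times> B) \<le> (\<Sum>\<^sub>\<infinity>x\<in>A. \<Sum>\<^sub>\<infinity>y\<in>B. f (x, y))"
    unfolding infsum_ennreal_eq_SUP[of f]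
  proof (rule SUP_least)
    fix F assume F: "F \<in> {F. finite F \<and> F \<subseteq> A \<times> B}"
    have fin: "finite (fst ` F)" "finite (snd ` F)" and sub: "fst ` F \<subseteq> A" "snd ` F \<subseteq> B"
      using F by auto
    have "sum f F \<le> sum f (fst ` F \<times> snd ` F)"
      using fin by (intro sum_mono2) force+
    also have "\<dots> = (\<Sum>x\<in>fst ` F. \<Sum>y\<in>snd ` F. f (x, y))"
      by (simp add: sum.cartesian_product)
    also have "\<dots> \<le> (\<Sum>x\<in>fst ` F. \<Sum>\<^sub>\<infinity>y\<in>B. f (x, y))"
      using fin sub by (intro sum_mono) (simp add: infsum_ennreal_eq_SUP SUP_upper)
    also have "\<dots> \<le> (\<Sum>\<^sub>\<infinity>x\<in>A. \<Sum>\<^sub>\<infinity>y\<in>B. f (x, y))"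
      using fin sub by (simp add: infsum_ennreal_eq_SUP[of "\<lambda>x. \<Sum>\<^sub>\<infinity>y\<in>B. f (x, y)"] SUP_upper)
    finally show "sum f F \<le> (\<Sum>\<^sub>\<infinity>x\<in>A. \<Sum>\<^sub>\<infinity>y\<in>B. f (x, y))" .
  qed
next
  show "(\<Sum>\<^sub>\<infinity>x\<in>A. \<Sum>\<^sub>\<infinity>y\<in>B. f (x, y)) \<le> infsum f (A \<times> B)"
    unfolding infsum_ennreal_eq_SUP[of "\<lambda>x. \<Sum>\<^sub>\<infinity>y\<in>B. f (x, y)"]
  proof (rule SUP_least)
    fix G assume G: "G \<in> {G. finite G \<and> G \<subseteq> A}"
    have "(\<Sum>x\<in>G. \<Sum>\<^sub>\<infinity>y\<in>B. f (x, y))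
        \<le> (SUP H\<in>{H. finite H \<and> H \<subseteq> B}. \<Sum>x\<in>G. \<Sum>y\<in>H. f (x, y))"
      using G sum_SUP_le_SUP_sum_ennreal[where G = G and B = B and f = "\<lambda>x y. f (x, y)"]
      by (simp add: infsum_ennreal_eq_SUP)
    also have "\<dots> \<le> infsum f (A \<times> B)"
    proof (rule SUP_least)
      fix H assume H: "H \<in> {H. finite H \<and> H \<subseteq> B}"
      have "(\<Sum>x\<in>G. \<Sum>y\<in>H. f (x, y)) = sum f (G \<times> H)"
        by (simp add: sum.cartesian_product)
      also have "\<dots> \<le> infsum f (A \<times> B)"
        using G H by (simp add: infsum_ennreal_eq_SUP[of f] SUP_upper Sigma_mono)
      finally show "(\<Sum>x\<in>G. \<Sum>y\<in>H. f (x, y)) \<le> infsum f (A \<times> B)" .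
    qed
    finally show "(\<Sum>x\<in>G. \<Sum>\<^sub>\<infinity>y\<in>B. f (x, y)) \<le> infsum f (A \<times> B)" .
  qed
qed

lemma infsum_swap_ennreal:
  fixes f :: "'a \<Rightarrow> 'b \<Rightarrow> ennreal"
  shows "(\<Sum>\<^sub>\<infinity>x\<in>A. \<Sum>\<^sub>\<infinity>y\<in>B. f x y) = (\<Sum>\<^sub>\<infinity>y\<in>B. \<Sum>\<^sub>\<infinity>x\<in>A. f x y)"
proof -
  have "B \<times> A = prod.swap ` (A \<times> B)" by auto
  then have "infsum (\<lambda>(x, y). f x y) (A \<times> B) = infsum (\<lambda>(y, x). f x y) (B \<times> A)"
    by (simp add: infsum_reindex o_def case_prod_unfold)
  then show ?thesis
    using infsum_Sigma_ennreal[of "\<lambda>(x, y). f x y" A B]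
      infsum_Sigma_ennreal[of "\<lambda>(y, x). f x y" B A] by simp
qed

lemma ennreal_infsum:
  fixes f :: "'a \<Rightarrow> real"
  assumes "f summable_on A" "\<And>x. x \<in> A \<Longrightarrow> 0 \<le> f x"
  shows "ennreal (infsum f A) = (\<Sum>\<^sub>\<infinity>x\<in>A. ennreal (f x))"
  using assms infsum_comm_additive_general[where f = ennreal and g = f and S = A]
  by (simp add: o_def subset_eq sum_ennreal)

lemma summable_on_if_infsum_ennreal_finite:
  fixes f :: "'a \<Rightarrow> real"
  assumes fin: "(\<Sum>\<^sub>\<infinity>x\<in>A. ennreal (f x)) < \<infinity>" and nonneg: "\<And>x. x \<in> A \<Longrightarrow> 0 \<le> f x"
  shows "f summable_on A"
proof (rule nonneg_bdd_above_summable_on[OF nonneg])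
  show "bdd_above (sum f ` {F. F \<subseteq> A \<and> finite F})"
  proof (rule bdd_aboveI)
    fix s assume "s \<in> sum f ` {F. F \<subseteq> A \<and> finite F}"
    then obtain F where F: "F \<subseteq> A" "finite F" "s = sum f F" by auto
    have "ennreal s = (\<Sum>x\<in>F. ennreal (f x))"
      using F nonneg by (auto simp: sum_ennreal subset_eq)
    also have "\<dots> \<le> (\<Sum>\<^sub>\<infinity>x\<in>A. ennreal (f x))"
      using F by (simp add: infsum_ennreal_eq_SUP SUP_upper)
    finally have "ennreal s \<le> (\<Sum>\<^sub>\<infinity>x\<in>A. ennreal (f x))" .
    then have "enn2real (ennreal s) \<le> enn2real (\<Sum>\<^sub>\<infinity>x\<in>A. ennreal (f x))"
      using fin by (intro enn2real_mono) auto
    moreover have "0 \<le> s" using F nonneg by (auto intro: sum_nonneg)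
    ultimately show "s \<le> enn2real (\<Sum>\<^sub>\<infinity>x\<in>A. ennreal (f x))" by simp
  qed
qed

lemma countable_summable_weight:
  assumes "countable (UNIV :: 'a set)" "\<And>x. 0 \<le> d x"
  shows "\<exists>\<delta> :: 'a \<Rightarrow> real. (\<forall>x. 0 < \<delta> x) \<and> (\<Sum>\<^sub>\<infinity>x\<in>UNIV. ennreal (\<delta> x * d x)) < \<infinity>"
proof -
  define N where "N = to_nat_on (UNIV :: 'a set)"
  have "inj N" unfolding N_def using assms(1) by (rule inj_on_to_nat_on)
  define \<delta> where "\<delta> x = (1/2) ^ N x / (1 + d x)" for x
  have \<delta>d: "\<delta> x * d x \<le> (1/2) ^ N x" for x
  proof -
    have "d x / (1 + d x) \<le> 1" using assms(2)[of x] by simp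
    then have "(1/2) ^ N x * (d x / (1 + d x)) \<le> (1/2::real) ^ N x" by (intro mult_left_le) auto
    then show ?thesis by (simp add: \<delta>_def)
  qed
  have geometric: "(\<lambda>n. (1/2::real) ^ n) summable_on UNIV"
    by (simp add: summable_on_UNIV_nonneg_real_iff summable_geometric)
  have "(\<Sum>\<^sub>\<infinity>x\<in>UNIV. ennreal (\<delta> x * d x)) \<le> (\<Sum>\<^sub>\<infinity>x\<in>UNIV. ennreal ((1/2) ^ N x))"
    by (intro infsum_mono_ennreal ennreal_leI \<delta>d)
  also have "\<dots> = (\<Sum>\<^sub>\<infinity>n\<in>range N. ennreal ((1/2) ^ n))"
    using \<open>inj N\<close> by (simp add: infsum_reindex o_def)
  also have "\<dots> \<le> (\<Sum>\<^sub>\<infinity>n\<in>UNIV. ennreal ((1/2) ^ n))"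
    by (rule infsum_mono_subset_ennreal) simp
  also have "\<dots> = ennreal (\<Sum>\<^sub>\<infinity>n\<in>UNIV. (1/2) ^ n)"
    using geometric by (simp add: ennreal_infsum)
  also have "\<dots> < \<infinity>" by simp
  finally show ?thesis
    using assms(2) by (intro exI[of _ \<delta>]) (auto simp: \<delta>_def add_pos_nonneg)
qed

lemma Max_diff_powr_le_sum:
  fixes a c :: "'i \<Rightarrow> real"
  assumes I: "finite I" "I \<noteq> {}" and p: "0 \<le> p"
  shows "\<bar>Max (a ` I) - Max (c ` I)\<bar> powr p \<le> (\<Sum>i\<in>I. \<bar>a i - c i\<bar> powr p)"
proof -
  have "\<exists>i\<in>I. \<bar>Max (a ` I) - Max (c ` I)\<bar> \<le> \<bar>a i - c i\<bar>"
  proof (cases "Max (c ` I) \<le> Max (a ` I)")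
    case True
    have "Max (a ` I) \<in> a ` I" using I by (intro Max_in) auto
    then obtain j where "j \<in> I" "Max (a ` I) = a j" by auto
    moreover have "c j \<le> Max (c ` I)" using I \<open>j \<in> I\<close> by auto
    ultimately show ?thesis using True by (intro bexI[of _ j]) auto
  next
    case False
    have "Max (c ` I) \<in> c ` I" using I by (intro Max_in) auto
    then obtain k where "k \<in> I" "Max (c ` I) = c k" by auto
    moreover have "a k \<le> Max (a ` I)" using I \<open>k \<in> I\<close> by auto
    ultimately show ?thesis using False by (intro bexI[of _ k]) auto
  qed
  then obtain i where i: "i \<in> I" "\<bar>Max (a ` I) - Max (c ` I)\<bar> \<le> \<bar>a i - c i\<bar>" by blast
  then have "\<bar>Max (a ` I) - Max (c ` I)\<bar> powr p \<le> \<bar>a i - c i\<bar> powr p"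
    using p by (intro powr_mono2) auto
  also have "\<dots> \<le> (\<Sum>i\<in>I. \<bar>a i - c i\<bar> powr p)"
    using I i by (intro member_le_sum) auto
  finally show ?thesis .
qed

lemma powr_add3_le:
  fixes u v w p :: real
  assumes "0 \<le> u" "0 \<le> v" "0 \<le> w" "0 \<le> p"
  shows "(u + v + w) powr p \<le> 3 powr p * (u powr p + v powr p + w powr p)"
proof -
  define M where "M = max u (max v w)"
  have "(u + v + w) powr p \<le> (3 * M) powr p"
    using assms by (intro powr_mono2) (auto simp: M_def)
  also have "\<dots> = 3 powr p * M powr p"
    using assms by (simp add: M_def powr_mult)
  also have "M powr p \<le> u powr p + v powr p + w powr p"
    using assms by (auto simp: M_def max_def)
  then have "3 powr p * M powr p \<le> 3 powr p * (u powr p + v powr p + w powr p)"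
    by (intro mult_left_mono) auto
  finally show ?thesis .
qed

lemma powr_less_imp_less:
  fixes x y p :: real
  assumes "0 < p" "0 \<le> y" "x powr p < y powr p"
  shows "x < y"
  using assms powr_mono2[of p y x] by force

lemma clamp_diff_le: "\<bar>min 1 (max 0 s) - min 1 (max 0 t)\<bar> \<le> \<bar>s - t :: real\<bar>"
  by (simp add: min_def max_def abs_if)

lemma liminf_inf_eq_infinity_iff: "liminf_inf f = \<infinity> \<longleftrightarrow> (\<forall>C. finite {x. f x \<le> C})"
proof
  assume lim: "liminf_inf f = \<infinity>"
  show "\<forall>C. finite {x. f x \<le> C}"
  proof
    fix C
    have "ereal C < liminf_inf f" using lim by simp
    then obtain K where K: "finite K" "ereal C < (INF x\<in>-K. ereal (f x))"
      unfolding liminf_inf_def less_SUP_iff by auto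
    have "{x. f x \<le> C} \<subseteq> K"
      using less_INF_D[OF K(2)] by force
    then show "finite {x. f x \<le> C}" using K(1) by (rule finite_subset)
  qed
next
  assume fin: "\<forall>C. finite {x. f x \<le> C}"
  show "liminf_inf f = \<infinity>"
    unfolding liminf_inf_def
  proof (rule ereal_top)
    fix B
    have "ereal B \<le> (INF x\<in>-{x. f x \<le> B}. ereal (f x))"
      by (rule INF_greatest) auto
    also have "\<dots> \<le> (SUP K\<in>{K. finite K}. INF x\<in>-K. ereal (f x))"
      using fin by (intro SUP_upper) auto
    finally show "ereal B \<le> (SUP K\<in>{K. finite K}. INF x\<in>-K. ereal (f x))" .
  qed
qed

lemma finite_compl_vimage_nbhd_boundary:
  assumes cT: "compactification T \<iota>" and U: "openin T U" "boundary T \<iota> \<subseteq> U"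
  shows "finite (- (\<iota> -` U))"
proof -
  have c: "compact_space T" "inj \<iota>" "range \<iota> \<subseteq> topspace T"
    "subtopology T (range \<iota>) = discrete_topology (range \<iota>)"
    using cT unfolding compactification_def by auto
  have "compactin T (topspace T - U)"
    using U(1) c(1) by (intro closedin_compact_space) auto
  moreover have "topspace T - U \<subseteq> range \<iota>"
    using U(2) by (auto simp: boundary_def)
  ultimately have "compactin (discrete_topology (range \<iota>)) (topspace T - U)"
    by (simp add: compactin_subtopology flip: c(4))
  then have "finite (topspace T - U)"
    by (simp add: compactin_discrete_topology)
  moreover have "- (\<iota> -` U) = \<iota> -` (topspace T - U)"
    using c(3) by auto
  ultimately show ?thesis
    using c(2) by (simp add: finite_vimageI)
qed

lemma nbhd_boundary_compl_image_finite:
  assumes cT: "compactification T \<iota>" and F: "finite F"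
  shows "openin T (topspace T - \<iota> ` F)" "boundary T \<iota> \<subseteq> topspace T - \<iota> ` F"
    "\<iota> -` (topspace T - \<iota> ` F) = - F"
proof -
  have c: "Hausdorff_space T" "inj \<iota>" "range \<iota> \<subseteq> topspace T"
    using cT unfolding compactification_def by auto
  have "closedin T (\<iota> ` F)"
    using Hausdorff_imp_t1_space[OF c(1)] F c(3) by (auto simp: t1_space_closedin_finite)
  then show "openin T (topspace T - \<iota> ` F)" by auto
  show "boundary T \<iota> \<subseteq> topspace T - \<iota> ` F" by (auto simp: boundary_def)
  show "\<iota> -` (topspace T - \<iota> ` F) = - F"
    using c(2,3) by (auto simp: inj_eq image_subset_iff)
qed

section \<open>Paths and metrics\<close>

lemma path_length_Cons_Cons:
  "path_length w (x # y # \<gamma>) = w x y + path_length w (y # \<gamma>)"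
  unfolding path_length_def
  by (simp only: length_Cons diff_Suc_1 sum.lessThan_Suc_shift nth_Cons_Suc nth_Cons_0)

lemma path_length_snoc:
  assumes "\<gamma> \<noteq> []"
  shows "path_length w (\<gamma> @ [z]) = path_length w \<gamma> + w (last \<gamma>) z"
proof -
  obtain k where k: "length \<gamma> = Suc k" using assms by (cases \<gamma>) auto
  have "path_length w (\<gamma> @ [z])
      = (\<Sum>i<k. w ((\<gamma> @ [z]) ! i) ((\<gamma> @ [z]) ! Suc i)) + w ((\<gamma> @ [z]) ! k) z"
    unfolding path_length_def using k by (simp add: nth_append)
  also have "(\<Sum>i<k. w ((\<gamma> @ [z]) ! i) ((\<gamma> @ [z]) ! Suc i)) = path_length w \<gamma>"
    unfolding path_length_def using k by (intro sum.cong) (auto simp: nth_append)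
  also have "(\<gamma> @ [z]) ! k = last \<gamma>"
    using k assms by (simp add: nth_append last_conv_nth)
  finally show ?thesis .
qed

lemma is_path_snoc:
  assumes "is_path b \<gamma> x y" "0 < b y z"
  shows "is_path b (\<gamma> @ [z]) x z"
  unfolding is_path_def
proof (intro conjI allI impI)
  have \<gamma>: "\<gamma> \<noteq> []" "hd \<gamma> = x" "last \<gamma> = y"
    "\<And>i. Suc i < length \<gamma> \<Longrightarrow> 0 < b (\<gamma> ! i) (\<gamma> ! Suc i)"
    using assms(1) unfolding is_path_def by auto
  then show "\<gamma> @ [z] \<noteq> []" "hd (\<gamma> @ [z]) = x" "last (\<gamma> @ [z]) = z" by simp_all
  fix i assume i: "Suc i < length (\<gamma> @ [z])"
  show "0 < b ((\<gamma> @ [z]) ! i) ((\<gamma> @ [z]) ! Suc i)"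
  proof (cases "Suc i < length \<gamma>")
    case True
    then show ?thesis using \<gamma>(4) by (simp add: nth_append)
  next
    case False
    then have "i = length \<gamma> - 1" "Suc i = length \<gamma>" using i by simp_all
    then show ?thesis using \<gamma> assms(2) by (simp add: nth_append last_conv_nth)
  qed
qed

lemma is_path_Cons_Cons:
  "is_path b (x # y # \<gamma>) x' z \<longleftrightarrow> x' = x \<and> 0 < b x y \<and> is_path b (y # \<gamma>) y z"
  unfolding is_path_def by (auto simp: nth_Cons' less_Suc_eq_0_disj)

lemma metric_le_path_length:
  assumes "is_metric \<sigma>" "is_path b \<gamma> x y"
  shows "\<sigma> x y \<le> path_length \<sigma> \<gamma>"
  using assms(2)
proof (induction \<gamma> arbitrary: x rule: induct_list012)
  case 1
  then show ?case by (simp add: is_path_def)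
next
  case (2 a)
  then have "x = y" by (auto simp: is_path_def)
  moreover have "\<sigma> y y = 0" using assms(1) by (simp add: is_metric_def)
  ultimately show ?case by (simp add: path_length_def)
next
  case (3 a c \<delta>)
  then have "x = a" "is_path b (c # \<delta>) c y" by (simp_all add: is_path_Cons_Cons)
  have "\<sigma> x y \<le> \<sigma> x c + \<sigma> c y" using assms(1) unfolding is_metric_def by blast
  also have "\<dots> \<le> \<sigma> x c + path_length \<sigma> (c # \<delta>)"
    using "3.IH"(2)[OF \<open>is_path b (c # \<delta>) c y\<close>] by simp
  finally show ?case using \<open>x = a\<close> by (simp add: path_length_Cons_Cons)
qed

lemma path_dist_le_path_length:
  assumes "\<And>x y. 0 \<le> w x y" "is_path b \<gamma> x y"
  shows "path_dist b w x y \<le> path_length w \<gamma>"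
proof -
  have "0 \<le> path_length w \<gamma>" for \<gamma>
    unfolding path_length_def using assms(1) by (intro sum_nonneg) auto
  then show ?thesis
    unfolding path_dist_def using assms(2) by (intro cInf_lower bdd_belowI[of _ 0]) auto
qed

definition perturbed_metric :: "('x \<Rightarrow> real) \<Rightarrow> ('x \<Rightarrow> real) \<Rightarrow> 'x \<Rightarrow> 'x \<Rightarrow> real" where
  "perturbed_metric f \<epsilon> x y = (if x = y then 0 else \<bar>f x - f y\<bar> + \<epsilon> x + \<epsilon> y)"

lemma perturbed_metric_le:
  assumes "\<And>x. 0 < \<epsilon> x"
  shows "perturbed_metric f \<epsilon> x y \<le> \<bar>f x - f y\<bar> + \<epsilon> x + \<epsilon> y"
  using assms[of x] assms[of y] by (simp add: perturbed_metric_def)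

lemma is_metric_perturbed_metric:
  assumes "\<And>x. 0 < \<epsilon> x"
  shows "is_metric (perturbed_metric f \<epsilon>)"
  unfolding is_metric_def
proof (intro conjI allI)
  fix x y z
  show "0 \<le> perturbed_metric f \<epsilon> x y" "perturbed_metric f \<epsilon> x y = 0 \<longleftrightarrow> x = y"
    using assms[of x] assms[of y] by (auto simp: perturbed_metric_def add_pos_pos)
  show "perturbed_metric f \<epsilon> x y = perturbed_metric f \<epsilon> y x"
    by (simp add: perturbed_metric_def abs_minus_commute)
  have "\<bar>f x - f z\<bar> \<le> \<bar>f x - f y\<bar> + \<bar>f y - f z\<bar>" by linarith
  then show "perturbed_metric f \<epsilon> x z \<le> perturbed_metric f \<epsilon> x y + perturbed_metric f \<epsilon> y z"
    using assms[of x] assms[of y] assms[of z] by (simp add: perturbed_metric_def)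
qed

lemma induces_discrete_perturbed_metric:
  assumes "\<And>x. 0 < \<epsilon> x"
  shows "induces_discrete (perturbed_metric f \<epsilon>)"
  unfolding induces_discrete_def
proof
  fix x
  have "perturbed_metric f \<epsilon> x y < \<epsilon> x \<Longrightarrow> y = x" for y
    using assms[of y] by (auto simp: perturbed_metric_def split: if_splits)
  then show "\<exists>r>0. \<forall>y. perturbed_metric f \<epsilon> x y < r \<longrightarrow> y = x"
    using assms[of x] by blast
qed

lemma finite_ball_perturbed_metric:
  assumes "\<And>x. 0 < \<epsilon> x" "\<forall>C. finite {x. f x \<le> C}"
  shows "finite {y. perturbed_metric f \<epsilon> x y \<le> r}"
proof -
  have "f y \<le> f x + r" if "perturbed_metric f \<epsilon> x y \<le> r" "y \<noteq> x" for y
    using that assms(1)[of x] assms(1)[of y] by (simp add: perturbed_metric_def)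
  then have "{y. perturbed_metric f \<epsilon> x y \<le> r} \<subseteq> insert x {y. f y \<le> f x + r}"
    by blast
  then show ?thesis using assms(2) by (meson finite_insert finite_subset)
qed

section \<open>Energy on a graph without killing term\<close>

definition edge_sum :: "('x \<Rightarrow> 'x \<Rightarrow> real) \<Rightarrow> real \<Rightarrow> ('x \<Rightarrow> 'x \<Rightarrow> real) \<Rightarrow> ennreal" where
  "edge_sum b p w = (\<Sum>\<^sub>\<infinity>x\<in>UNIV. \<Sum>\<^sub>\<infinity>y\<in>UNIV. ennreal (b x y * w x y powr p))"

text \<open>Of the axioms of \<open>weighted_graph b m (\<lambda>_. 0)\<close> only these are needed (neither \<open>m\<close>
  nor the infiniteness of the vertex set enters the argument), and any exponent \<open>p > 0\<close> will do.\<close>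
locale graph_without_killing =
  fixes b :: "'x \<Rightarrow> 'x \<Rightarrow> real" and p :: real
  assumes b_sym: "b x y = b y x"
    and b_nonneg: "0 \<le> b x y"
    and b_diag: "b x x = 0"
    and b_summable: "(\<lambda>y. b x y) summable_on UNIV"
    and countable_vertices: "countable (UNIV :: 'x set)"
    and connected: "(\<lambda>u v. 0 < b u v)\<^sup>*\<^sup>* x y"
    and p_pos: "0 < p"
begin

abbreviation E :: "('x \<Rightarrow> real) \<Rightarrow> ennreal" where
  "E \<equiv> energy b (\<lambda>_. 0) p"

lemma energy_eq_edge_sum: "E f = edge_sum b p (\<lambda>x y. \<bar>f x - f y\<bar>) / 2"
  unfolding energy_def edge_sum_def
  using infsum_Sigma_ennreal[of "\<lambda>(x, y). ennreal (b x y * \<bar>f x - f y\<bar> powr p)" UNIV UNIV]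
  by simp

lemma edge_sum_mono:
  assumes "\<And>x y. 0 < b x y \<Longrightarrow> w x y \<le> w' x y" "\<And>x y. 0 \<le> w x y"
  shows "edge_sum b p w \<le> edge_sum b p w'"
proof -
  have "b x y * w x y powr p \<le> b x y * w' x y powr p" for x y
  proof (cases "0 < b x y")
    case True
    then show ?thesis using assms p_pos by (intro mult_left_mono powr_mono2) auto
  next
    case False
    then show ?thesis using b_nonneg[of x y] by simp
  qed
  then show ?thesis
    unfolding edge_sum_def by (intro infsum_mono_ennreal ennreal_leI)
qed

lemma edge_sum_scale:
  assumes "0 \<le> L" "\<And>x y. 0 \<le> w x y"
  shows "edge_sum b p (\<lambda>x y. L * w x y) = ennreal (L powr p) * edge_sum b p w"
proof -
  have "ennreal (b x y * (L * w x y) powr p) = ennreal (L powr p) * ennreal (b x y * w x y powr p)"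
    for x y
    using assms by (simp add: powr_mult mult.left_commute ennreal_mult')
  then show ?thesis
    unfolding edge_sum_def by (simp add: infsum_cmult_right_ennreal)
qed

lemma edge_sum_add3_le:
  assumes "\<And>x y. 0 \<le> u x y" "\<And>x y. 0 \<le> v x y" "\<And>x y. 0 \<le> w x y"
  shows "edge_sum b p (\<lambda>x y. u x y + v x y + w x y)
    \<le> ennreal (3 powr p) * (edge_sum b p u + edge_sum b p v + edge_sum b p w)"
proof -
  let ?t = "\<lambda>g x y. ennreal (b x y * g x y powr p)"
  have pointwise: "ennreal (b x y * (u x y + v x y + w x y) powr p)
      \<le> ennreal (3 powr p) * (?t u x y + ?t v x y + ?t w x y)" for x y
  proof -
    have "b x y * (u x y + v x y + w x y) powr p
        \<le> b x y * (3 powr p * (u x y powr p + v x y powr p + w x y powr p))"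
      using assms p_pos b_nonneg by (intro mult_left_mono powr_add3_le) auto
    also have "\<dots> = 3 powr p * (b x y * u x y powr p + b x y * v x y powr p + b x y * w x y powr p)"
      by (simp add: algebra_simps)
    finally have "ennreal (b x y * (u x y + v x y + w x y) powr p)
        \<le> ennreal (3 powr p * (b x y * u x y powr p + b x y * v x y powr p + b x y * w x y powr p))"
      by (rule ennreal_leI)
    also have "\<dots> = ennreal (3 powr p) * (?t u x y + ?t v x y + ?t w x y)"
      using b_nonneg[of x y] by (simp add: ennreal_mult')
    finally show ?thesis .
  qed
  have "edge_sum b p (\<lambda>x y. u x y + v x y + w x y)
      \<le> (\<Sum>\<^sub>\<infinity>x\<in>UNIV. \<Sum>\<^sub>\<infinity>y\<in>UNIV. ennreal (3 powr p) * (?t u x y + ?t v x y + ?t w x y))"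
    unfolding edge_sum_def by (intro infsum_mono_ennreal pointwise)
  also have "\<dots> = ennreal (3 powr p) * (edge_sum b p u + edge_sum b p v + edge_sum b p w)"
    unfolding edge_sum_def
    by (simp add: infsum_cmult_right_ennreal infsum_add summable_on_ennreal_fun)
  finally show ?thesis .
qed

lemma edge_sum_vertex_weight:
  "edge_sum b p (\<lambda>x y. g x) = (\<Sum>\<^sub>\<infinity>x\<in>UNIV. ennreal (g x powr p * (\<Sum>\<^sub>\<infinity>y\<in>UNIV. b x y)))"
proof -
  have "(\<Sum>\<^sub>\<infinity>y\<in>UNIV. ennreal (b x y * g x powr p)) = ennreal (g x powr p * (\<Sum>\<^sub>\<infinity>y\<in>UNIV. b x y))"
    for x
  proof -
    have "(\<Sum>\<^sub>\<infinity>y\<in>UNIV. ennreal (b x y * g x powr p))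
        = (\<Sum>\<^sub>\<infinity>y\<in>UNIV. ennreal (g x powr p) * ennreal (b x y))"
      by (simp add: ennreal_mult'' mult.commute)
    also have "\<dots> = ennreal (g x powr p) * ennreal (\<Sum>\<^sub>\<infinity>y\<in>UNIV. b x y)"
      by (simp add: infsum_cmult_right_ennreal ennreal_infsum b_nonneg b_summable)
    also have "\<dots> = ennreal (g x powr p * (\<Sum>\<^sub>\<infinity>y\<in>UNIV. b x y))"
      by (simp add: ennreal_mult')
    finally show ?thesis .
  qed
  then show ?thesis unfolding edge_sum_def by simp
qed

lemma edge_sum_transpose: "edge_sum b p (\<lambda>x y. w y x) = edge_sum b p w"
  unfolding edge_sum_def by (subst infsum_swap_ennreal) (simp add: b_sym)

lemma energy_contraction:
  assumes "0 \<le> L" "\<And>x y. \<bar>g x - g y\<bar> \<le> L * \<bar>f x - f y\<bar>"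
  shows "E g \<le> ennreal (L powr p) * E f"
proof -
  have "edge_sum b p (\<lambda>x y. \<bar>g x - g y\<bar>) \<le> edge_sum b p (\<lambda>x y. L * \<bar>f x - f y\<bar>)"
    using assms(2) by (intro edge_sum_mono) auto
  also have "\<dots> = ennreal (L powr p) * edge_sum b p (\<lambda>x y. \<bar>f x - f y\<bar>)"
    using assms(1) by (simp add: edge_sum_scale)
  finally show ?thesis
    unfolding energy_eq_edge_sum ennreal_times_divide by (rule divide_right_mono_ennreal)
qed

lemma edge_sum_eq_twice_energy: "edge_sum b p (\<lambda>x y. \<bar>f x - f y\<bar>) = 2 * E f"
  unfolding energy_eq_edge_sum ennreal_times_divide
  by (simp add: mult.commute[of 2] ennreal_mult_divide_eq)

lemma Dp_iff_edge_sum: "f \<in> Dp b (\<lambda>_. 0) p \<longleftrightarrow> edge_sum b p (\<lambda>x y. \<bar>f x - f y\<bar>) < \<infinity>"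
  unfolding Dp_def edge_sum_eq_twice_energy by (auto simp: ennreal_mult_less_top)

lemma edge_term_le_energy: "ennreal (b x y * \<bar>f x - f y\<bar> powr p / 2) \<le> E f"
proof -
  have "ennreal (b x y * \<bar>f x - f y\<bar> powr p) \<le> (\<Sum>\<^sub>\<infinity>y\<in>UNIV. ennreal (b x y * \<bar>f x - f y\<bar> powr p))"
    by (rule infsum_ennreal_ge_member) simp
  also have "\<dots> \<le> edge_sum b p (\<lambda>x y. \<bar>f x - f y\<bar>)"
    unfolding edge_sum_def by (rule infsum_ennreal_ge_member) simp
  finally have "ennreal (b x y * \<bar>f x - f y\<bar> powr p) / 2 \<le> E f"
    unfolding energy_eq_edge_sum by (rule divide_right_mono_ennreal)
  then show ?thesis
    using b_nonneg[of x y] by (simp add: ennreal_divide_numeral)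
qed

lemma energy_le_infsum:
  fixes a :: "'i \<Rightarrow> 'x \<Rightarrow> real"
  assumes "\<And>x y. ennreal (\<bar>f x - f y\<bar> powr p) \<le> (\<Sum>\<^sub>\<infinity>n\<in>UNIV. ennreal (\<bar>a n x - a n y\<bar> powr p))"
  shows "E f \<le> (\<Sum>\<^sub>\<infinity>n\<in>UNIV. E (a n))"
proof -
  let ?t = "\<lambda>x y n. ennreal (b x y * \<bar>a n x - a n y\<bar> powr p)"
  have "ennreal (b x y * \<bar>f x - f y\<bar> powr p) \<le> (\<Sum>\<^sub>\<infinity>n\<in>UNIV. ?t x y n)" for x y
    using mult_left_mono[OF assms[of x y], of "ennreal (b x y)"] b_nonneg[of x y]
    by (simp add: ennreal_mult infsum_cmult_right_ennreal)
  then have "edge_sum b p (\<lambda>x y. \<bar>f x - f y\<bar>)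
      \<le> (\<Sum>\<^sub>\<infinity>x\<in>UNIV. \<Sum>\<^sub>\<infinity>y\<in>UNIV. \<Sum>\<^sub>\<infinity>n\<in>UNIV. ?t x y n)"
    unfolding edge_sum_def by (intro infsum_mono_ennreal)
  also have "\<dots> = (\<Sum>\<^sub>\<infinity>x\<in>UNIV. \<Sum>\<^sub>\<infinity>n\<in>UNIV. \<Sum>\<^sub>\<infinity>y\<in>UNIV. ?t x y n)"
    by (intro infsum_cong infsum_swap_ennreal)
  also have "\<dots> = (\<Sum>\<^sub>\<infinity>n\<in>UNIV. edge_sum b p (\<lambda>x y. \<bar>a n x - a n y\<bar>))"
    unfolding edge_sum_def by (rule infsum_swap_ennreal)
  finally show ?thesis
    unfolding energy_eq_edge_sum infsum_divide_ennreal by (rule divide_right_mono_ennreal)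
qed

lemma finite_measure_intrinsic_iff_edge_sum:
  assumes nonneg: "\<And>x y. 0 \<le> w x y" and sym: "\<And>x y. w x y = w y x"
  shows "(\<exists>\<mu>. finite_measure_fn \<mu> \<and> p_intrinsic b p w \<mu>) \<longleftrightarrow> edge_sum b p w < \<infinity>"
proof
  assume "\<exists>\<mu>. finite_measure_fn \<mu> \<and> p_intrinsic b p w \<mu>"
  then obtain \<mu> where \<mu>: "\<And>x. 0 \<le> \<mu> x" "\<mu> summable_on UNIV"
      "\<And>x. (\<Sum>\<^sub>\<infinity>y\<in>UNIV. ennreal (b x y * w x y powr p)) \<le> ennreal (\<mu> x)"
    unfolding finite_measure_fn_def p_intrinsic_def by blast
  have "edge_sum b p w \<le> (\<Sum>\<^sub>\<infinity>x\<in>UNIV. ennreal (\<mu> x))"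
    unfolding edge_sum_def by (intro infsum_mono_ennreal \<mu>(3))
  also have "\<dots> = ennreal (\<Sum>\<^sub>\<infinity>x\<in>UNIV. \<mu> x)"
    using \<mu>(1,2) by (simp add: ennreal_infsum)
  finally show "edge_sum b p w < \<infinity>"
    by (metis ennreal_less_top infinity_ennreal_def le_less_trans)
next
  assume fin: "edge_sum b p w < \<infinity>"
  define T where "T x = (\<Sum>\<^sub>\<infinity>y\<in>UNIV. ennreal (b x y * w x y powr p))" for x
  have sum_T: "(\<Sum>\<^sub>\<infinity>x\<in>UNIV. T x) = edge_sum b p w"
    by (simp add: T_def edge_sum_def)
  have "T x < \<infinity>" for x
    using infsum_ennreal_ge_member[of x UNIV T] fin unfolding sum_T by (rule le_less_trans) simp
  then have \<mu>T: "ennreal (enn2real (T x)) = T x" for x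
    by simp
  have "finite_measure_fn (\<lambda>x. enn2real (T x))"
    unfolding finite_measure_fn_def
    using summable_on_if_infsum_ennreal_finite[of "\<lambda>x. enn2real (T x)" UNIV] fin
    by (simp add: \<mu>T sum_T)
  moreover have "p_intrinsic b p w (\<lambda>x. enn2real (T x))"
    unfolding p_intrinsic_def \<mu>T using nonneg sym by (simp add: T_def)
  ultimately show "\<exists>\<mu>. finite_measure_fn \<mu> \<and> p_intrinsic b p w \<mu>" by blast
qed

lemma path_exists: "\<exists>\<gamma>. is_path b \<gamma> x y"
  using connected[of x y]
proof (induction rule: rtranclp_induct)
  case base
  show ?case by (rule exI[of _ "[x]"]) (simp add: is_path_def)
next
  case (step y z)
  then obtain \<gamma> where "is_path b \<gamma> x y" by blast
  then have "is_path b (\<gamma> @ [z]) x z" using step(2) by (rule is_path_snoc)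
  then show ?case by blast
qed

lemma path_dist_greatest:
  assumes "\<And>\<gamma>. is_path b \<gamma> x y \<Longrightarrow> c \<le> path_length w \<gamma>"
  shows "c \<le> path_dist b w x y"
  unfolding path_dist_def using path_exists[of x y] assms by (intro cInf_greatest) auto

lemma path_dist_edge:
  assumes "\<And>x y. 0 \<le> w x y" "0 < b x y"
  shows "path_dist b w z y \<le> path_dist b w z x + w x y"
proof -
  have "path_dist b w z y - w x y \<le> path_dist b w z x"
  proof (rule path_dist_greatest)
    fix \<gamma> assume \<gamma>: "is_path b \<gamma> z x"
    then have "\<gamma> \<noteq> []" "last \<gamma> = x" by (auto simp: is_path_def)
    then have "path_length w (\<gamma> @ [y]) = path_length w \<gamma> + w x y"
      by (simp add: path_length_snoc)
    moreover have "path_dist b w z y \<le> path_length w (\<gamma> @ [y])"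
      using assms \<gamma> by (intro path_dist_le_path_length is_path_snoc)
    ultimately show "path_dist b w z y - w x y \<le> path_length w \<gamma>" by simp
  qed
  then show ?thesis by simp
qed

lemma metric_le_path_dist: "is_metric \<sigma> \<Longrightarrow> \<sigma> x y \<le> path_dist b \<sigma> x y"
  by (intro path_dist_greatest metric_le_path_length)

lemma p_parabolicD:
  assumes "p_parabolic b (\<lambda>_. 0) p" "finite K" "0 < e"
  shows "\<exists>\<phi>. finite {x. \<phi> x \<noteq> 0} \<and> (\<forall>x\<in>K. 1 \<le> \<phi> x) \<and> E \<phi> < ennreal e"
proof -
  have "capp b (\<lambda>_. 0) p K < ennreal e"
    using assms unfolding p_parabolic_def by simp
  then show ?thesis unfolding capp_def INF_less_iff by blast
qed

lemma p_parabolicI: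
  assumes "\<And>K e. finite K \<Longrightarrow> 0 < e \<Longrightarrow>
    \<exists>v. E v < ennreal e \<and> (\<forall>x\<in>K. 1 \<le> v x) \<and> finite {x. 0 < v x}"
  shows "p_parabolic b (\<lambda>_. 0) p"
  unfolding p_parabolic_def
proof (intro allI impI)
  fix K :: "'x set" assume K: "finite K"
  have small: "capp b (\<lambda>_. 0) p K \<le> ennreal e" if "0 < e" for e
  proof -
    obtain v where v: "E v < ennreal e" "\<forall>x\<in>K. 1 \<le> v x" "finite {x. 0 < v x}"
      using assms[OF K \<open>0 < e\<close>] by blast
    define \<phi> where "\<phi> x = min 1 (max 0 (v x))" for x
    have "{x. \<phi> x \<noteq> 0} \<subseteq> {x. 0 < v x}"
      by (auto simp: \<phi>_def)
    then have "finite {x. \<phi> x \<noteq> 0}" using v(3) by (rule finite_subset)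
    moreover have "\<forall>x\<in>K. 1 \<le> \<phi> x" using v(2) by (simp add: \<phi>_def le_max_iff_disj)
    ultimately have "capp b (\<lambda>_. 0) p K \<le> E \<phi>"
      unfolding capp_def by (intro INF_lower) auto
    also have "\<dots> \<le> ennreal (1 powr p) * E v"
      by (rule energy_contraction) (simp_all add: \<phi>_def clamp_diff_le)
    also have "\<dots> \<le> ennreal e" using v(1) by simp
    finally show ?thesis .
  qed
  have "capp b (\<lambda>_. 0) p K \<le> 0"
    by (rule ennreal_le_epsilon) (simp add: small)
  then show "capp b (\<lambda>_. 0) p K = 0" by simp
qed

section \<open>Parabolicity, proper functions and intrinsic metrics\<close>

lemma p_parabolic_if_proper_finite_energy:
  assumes f: "f \<in> Dp b (\<lambda>_. 0) p" and proper: "liminf_inf f = \<infinity>"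
  shows "p_parabolic b (\<lambda>_. 0) p"
proof (rule p_parabolicI)
  fix K :: "'x set" and e :: real assume K: "finite K" and e: "0 < e"
  obtain s where s: "E f = ennreal s" "0 \<le> s"
    using f unfolding Dp_def by (cases "E f") auto
  define t where "t = max (1 + (\<Sum>x\<in>K. \<bar>f x\<bar>)) ((s / e + 1) powr (1 / p))"
  have t1: "1 \<le> t"
    unfolding t_def by (intro max.coboundedI1) (simp add: sum_nonneg)
  have f_le_t: "f x \<le> t" if "x \<in> K" for x
  proof -
    have "\<bar>f x\<bar> \<le> (\<Sum>x\<in>K. \<bar>f x\<bar>)"
      using K that by (intro member_le_sum) auto
    then show ?thesis unfolding t_def by linarith
  qed
  have "s / e + 1 = ((s / e + 1) powr (1 / p)) powr p"
    using s e p_pos by (simp add: powr_powr)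
  also have "\<dots> \<le> t powr p"
    using p_pos by (intro powr_mono2) (auto simp: t_def)
  finally have "s < e * t powr p"
    using e by (simp add: field_simps)
  then have small: "(1 / t) powr p * s < e"
    using t1 by (simp add: powr_divide field_simps)
  define v where "v x = 2 - f x / t" for x
  have "E v \<le> ennreal ((1 / t) powr p) * E f"
  proof (rule energy_contraction)
    fix x y
    show "\<bar>v x - v y\<bar> \<le> 1 / t * \<bar>f x - f y\<bar>"
      using t1 by (simp add: v_def abs_minus_commute diff_divide_distrib[symmetric] abs_divide)
  qed (use t1 in simp)
  also have "\<dots> = ennreal ((1 / t) powr p * s)"
    using s by (simp add: ennreal_mult')
  also have "\<dots> < ennreal e"
    using small e by (intro ennreal_lessI)
  finally have "E v < ennreal e" .
  moreover have "\<forall>x\<in>K. 1 \<le> v x"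
    using f_le_t t1 by (simp add: v_def)
  moreover have "{x. 0 < v x} \<subseteq> {x. f x \<le> 2 * t}"
    using t1 by (auto simp: v_def field_simps)
  then have "finite {x. 0 < v x}"
    using proper by (auto simp: liminf_inf_eq_infinity_iff intro: finite_subset)
  ultimately show "\<exists>v. E v < ennreal e \<and> (\<forall>x\<in>K. 1 \<le> v x) \<and> finite {x. 0 < v x}"
    by blast
qed

lemma energy_Max_le_infsum:
  fixes a :: "nat \<Rightarrow> 'x \<Rightarrow> real" and N :: "'x \<Rightarrow> nat"
  assumes "\<And>n x. N x < n \<Longrightarrow> a n x \<le> a 0 x"
  shows "E (\<lambda>x. Max ((\<lambda>n. a n x) ` {..N x})) \<le> (\<Sum>\<^sub>\<infinity>n\<in>UNIV. E (a n))"
proof (rule energy_le_infsum)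
  have stable: "Max ((\<lambda>n. a n z) ` {..M}) = Max ((\<lambda>n. a n z) ` {..N z})" if "N z \<le> M" for z M
  proof (rule antisym)
    have "a n z \<le> Max ((\<lambda>n. a n z) ` {..N z})" for n
    proof (cases "n \<le> N z")
      case False
      then have "a n z \<le> a 0 z" by (intro assms) simp
      also have "\<dots> \<le> Max ((\<lambda>n. a n z) ` {..N z})" by (intro Max_ge) auto
      finally show ?thesis .
    qed (intro Max_ge, auto)
    then show "Max ((\<lambda>n. a n z) ` {..M}) \<le> Max ((\<lambda>n. a n z) ` {..N z})"
      by (simp add: Max_le_iff)
    show "Max ((\<lambda>n. a n z) ` {..N z}) \<le> Max ((\<lambda>n. a n z) ` {..M})"
      using that by (intro Max_mono) auto
  qed
  fix x y
  let ?M = "max (N x) (N y)"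
  have "\<bar>Max ((\<lambda>n. a n x) ` {..N x}) - Max ((\<lambda>n. a n y) ` {..N y})\<bar> powr p
      = \<bar>Max ((\<lambda>n. a n x) ` {..?M}) - Max ((\<lambda>n. a n y) ` {..?M})\<bar> powr p"
    using stable[of x ?M] stable[of y ?M] by simp
  also have "\<dots> \<le> (\<Sum>n\<le>?M. \<bar>a n x - a n y\<bar> powr p)"
    using p_pos by (intro Max_diff_powr_le_sum) auto
  finally have "ennreal (\<bar>Max ((\<lambda>n. a n x) ` {..N x}) - Max ((\<lambda>n. a n y) ` {..N y})\<bar> powr p)
      \<le> (\<Sum>n\<le>?M. ennreal (\<bar>a n x - a n y\<bar> powr p))"
    by (simp add: ennreal_leI sum_ennreal)
  also have "\<dots> = (\<Sum>\<^sub>\<infinity>n\<in>{..?M}. ennreal (\<bar>a n x - a n y\<bar> powr p))"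
    by (rule infsum_finite[symmetric]) simp
  also have "\<dots> \<le> (\<Sum>\<^sub>\<infinity>n\<in>UNIV. ennreal (\<bar>a n x - a n y\<bar> powr p))"
    by (rule infsum_mono_subset_ennreal) simp
  finally show "ennreal (\<bar>Max ((\<lambda>n. a n x) ` {..N x}) - Max ((\<lambda>n. a n y) ` {..N y})\<bar> powr p)
      \<le> (\<Sum>\<^sub>\<infinity>n\<in>UNIV. ennreal (\<bar>a n x - a n y\<bar> powr p))" .
qed

lemma energy_scaled_clamp_compl_le:
  assumes "0 \<le> c"
  shows "E (\<lambda>x. c * (1 - min 1 (max 0 (\<phi> x)))) \<le> ennreal (c powr p) * E \<phi>"
proof (rule energy_contraction[OF assms])
  fix x y
  have "\<bar>c * (1 - min 1 (max 0 (\<phi> x))) - c * (1 - min 1 (max 0 (\<phi> y)))\<bar>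
      = c * \<bar>min 1 (max 0 (\<phi> y)) - min 1 (max 0 (\<phi> x))\<bar>"
    using assms by (simp add: abs_mult right_diff_distrib[symmetric])
  also have "\<dots> \<le> c * \<bar>\<phi> x - \<phi> y\<bar>"
    using assms clamp_diff_le[of "\<phi> y" "\<phi> x"] by (simp add: mult_left_mono abs_minus_commute)
  finally show "\<bar>c * (1 - min 1 (max 0 (\<phi> x))) - c * (1 - min 1 (max 0 (\<phi> y)))\<bar>
      \<le> c * \<bar>\<phi> x - \<phi> y\<bar>" .
qed

lemma proper_finite_energy_if_exhausting_test_functions:
  fixes N :: "'x \<Rightarrow> nat" and \<phi> :: "nat \<Rightarrow> 'x \<Rightarrow> real"
  assumes supp: "\<And>n. finite {x. \<phi> n x \<noteq> 0}" and exhaust: "\<And>n x. N x \<le> n \<Longrightarrow> 1 \<le> \<phi> n x"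
    and small: "\<And>n. E (\<phi> n) \<le> ennreal ((1/2) ^ n / (real n + 1) powr p)"
  shows "\<exists>f\<in>Dp b (\<lambda>_. 0) p. liminf_inf f = \<infinity>"
proof
  define a where "a n x = real n * (1 - min 1 (max 0 (\<phi> n x)))" for n x
  have energy_a: "E (a n) \<le> ennreal ((1/2) ^ n)" for n
  proof -
    have "E (a n) \<le> ennreal (real n powr p) * E (\<phi> n)"
      unfolding a_def by (rule energy_scaled_clamp_compl_le) simp
    also have "\<dots> \<le> ennreal (real n powr p) * ennreal ((1/2) ^ n / (real n + 1) powr p)"
      using small[of n] by (rule mult_left_mono) simp
    also have "\<dots> = ennreal (real n powr p * ((1/2) ^ n / (real n + 1) powr p))"
      by (rule ennreal_mult'[symmetric]) simp
    also have "\<dots> \<le> ennreal ((1/2) ^ n)"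
    proof (rule ennreal_leI)
      have "real n powr p \<le> (real n + 1) powr p"
        using p_pos by (intro powr_mono2) auto
      then show "real n powr p * ((1/2) ^ n / (real n + 1) powr p) \<le> (1/2) ^ n"
        by (simp add: field_simps)
    qed
    finally show ?thesis .
  qed
  define f where "f x = Max ((\<lambda>n. a n x) ` {..N x})" for x
  have "E f \<le> (\<Sum>\<^sub>\<infinity>n\<in>UNIV. E (a n))"
  proof (unfold f_def, rule energy_Max_le_infsum)
    fix n x assume "N x < n"
    then show "a n x \<le> a 0 x" using exhaust[of x n] by (simp add: a_def)
  qed
  also have "\<dots> \<le> (\<Sum>\<^sub>\<infinity>n\<in>UNIV. ennreal ((1/2) ^ n))"
    by (intro infsum_mono_ennreal energy_a)
  also have "\<dots> = ennreal (\<Sum>\<^sub>\<infinity>n\<in>UNIV. (1/2) ^ n)"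
    by (simp add: ennreal_infsum summable_on_UNIV_nonneg_real_iff summable_geometric)
  finally show "f \<in> Dp b (\<lambda>_. 0) p"
    unfolding Dp_def by (simp add: le_less_trans)
  have "finite {x. f x \<le> C}" for C
  proof -
    obtain n where n: "C < real n" using reals_Archimedean2 by blast
    have "\<phi> n x \<noteq> 0" if "f x \<le> C" for x
    proof
      assume "\<phi> n x = 0"
      then have "n < N x" using exhaust[of x n] by force
      then have "a n x \<le> f x" unfolding f_def by (intro Max_ge) auto
      with \<open>\<phi> n x = 0\<close> that n show False by (simp add: a_def)
    qed
    then have "{x. f x \<le> C} \<subseteq> {x. \<phi> n x \<noteq> 0}" by blast
    then show ?thesis using supp[of n] by (rule finite_subset)
  qed
  then show "liminf_inf f = \<infinity>" by (simp add: liminf_inf_eq_infinity_iff)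
qed

lemma proper_finite_energy_if_p_parabolic:
  assumes par: "p_parabolic b (\<lambda>_. 0) p"
  shows "\<exists>f\<in>Dp b (\<lambda>_. 0) p. liminf_inf f = \<infinity>"
proof -
  define N where "N = to_nat_on (UNIV :: 'x set)"
  have "inj N" unfolding N_def using countable_vertices by (rule inj_on_to_nat_on)
  then have fin: "finite {x. N x \<le> n}" for n
    using finite_vimageI[of "{..n}" N] by (simp add: vimage_def)
  have "\<forall>n. \<exists>\<phi>. finite {x. \<phi> x \<noteq> 0} \<and> (\<forall>x\<in>{x. N x \<le> n}. 1 \<le> \<phi> x)
      \<and> E \<phi> < ennreal ((1/2) ^ n / (real n + 1) powr p)"
    by (intro allI p_parabolicD[OF par fin]) simp
  then obtain \<phi> where "\<forall>n. finite {x. \<phi> n x \<noteq> 0} \<and> (\<forall>x\<in>{x. N x \<le> n}. 1 \<le> \<phi> n x)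
      \<and> E (\<phi> n) < ennreal ((1/2) ^ n / (real n + 1) powr p)"
    by (metis choice)
  then show ?thesis
    by (intro proper_finite_energy_if_exhausting_test_functions[of \<phi> N]) (auto intro: less_imp_le)
qed

lemma intrinsic_metric_if_proper_finite_energy:
  assumes f: "f \<in> Dp b (\<lambda>_. 0) p" and proper: "liminf_inf f = \<infinity>"
  shows "\<exists>\<sigma> \<mu>. is_metric \<sigma> \<and> finite_measure_fn \<mu> \<and> p_intrinsic b p \<sigma> \<mu> \<and>
    induces_discrete \<sigma> \<and> (\<forall>x r. r \<ge> 0 \<longrightarrow> finite {y. \<sigma> x y \<le> r})"
proof -
  define deg where "deg x = (\<Sum>\<^sub>\<infinity>y\<in>UNIV. b x y)" for x
  obtain \<delta> where \<delta>: "\<And>x. 0 < \<delta> x" "(\<Sum>\<^sub>\<infinity>x\<in>UNIV. ennreal (\<delta> x * deg x)) < \<infinity>"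
    using countable_summable_weight[OF countable_vertices, of deg]
    by (auto simp: deg_def b_nonneg infsum_nonneg)
  define \<epsilon> where "\<epsilon> x = \<delta> x powr (1 / p)" for x
  have \<epsilon>: "0 < \<epsilon> x" for x
    using \<delta>(1)[of x] by (simp add: \<epsilon>_def)
  have \<epsilon>_powr: "\<epsilon> x powr p = \<delta> x" for x
    using \<delta>(1)[of x] p_pos by (simp add: \<epsilon>_def powr_powr)
  define \<sigma> where "\<sigma> = perturbed_metric f \<epsilon>"
  have metric: "is_metric \<sigma>"
    unfolding \<sigma>_def using \<epsilon> by (rule is_metric_perturbed_metric)
  have "edge_sum b p \<sigma> \<le> edge_sum b p (\<lambda>x y. \<bar>f x - f y\<bar> + \<epsilon> x + \<epsilon> y)"
    using metric \<epsilon> by (intro edge_sum_mono) (auto simp: \<sigma>_def perturbed_metric_le is_metric_def)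
  also have "\<dots> \<le> ennreal (3 powr p) * (edge_sum b p (\<lambda>x y. \<bar>f x - f y\<bar>)
      + edge_sum b p (\<lambda>x y. \<epsilon> x) + edge_sum b p (\<lambda>x y. \<epsilon> y))"
    using \<epsilon> by (intro edge_sum_add3_le) (auto intro: less_imp_le)
  also have "\<dots> < \<infinity>"
  proof -
    have "edge_sum b p (\<lambda>x y. \<epsilon> x) < \<infinity>"
      using \<delta>(2) by (simp add: edge_sum_vertex_weight \<epsilon>_powr deg_def)
    moreover have "edge_sum b p (\<lambda>x y. \<epsilon> y) = edge_sum b p (\<lambda>x y. \<epsilon> x)"
      by (rule edge_sum_transpose)
    ultimately show ?thesis
      using f by (simp add: Dp_iff_edge_sum ennreal_mult_less_top)
  qed
  finally obtain \<mu> where "finite_measure_fn \<mu>" "p_intrinsic b p \<sigma> \<mu>"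
    using finite_measure_intrinsic_iff_edge_sum[of \<sigma>] metric by (auto simp: is_metric_def)
  moreover have "induces_discrete \<sigma>"
    unfolding \<sigma>_def using \<epsilon> by (rule induces_discrete_perturbed_metric)
  moreover have "finite {y. \<sigma> x y \<le> r}" for x r
    unfolding \<sigma>_def using \<epsilon> proper
    by (intro finite_ball_perturbed_metric) (auto simp: liminf_inf_eq_infinity_iff)
  ultimately show ?thesis using metric by blast
qed

lemma intrinsic_weight_if_intrinsic_metric:
  assumes metric: "is_metric \<sigma>" and \<mu>: "finite_measure_fn \<mu>" "p_intrinsic b p \<sigma> \<mu>"
    and balls: "\<forall>x r. r \<ge> 0 \<longrightarrow> finite {y. \<sigma> x y \<le> r}"
  shows "\<exists>w \<mu>. alt_edge_weight b w \<and> finite_measure_fn \<mu> \<and> p_intrinsic b p w \<mu> \<and>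
    (\<forall>x r. finite {y. path_dist b w x y \<le> r})"
proof (intro exI conjI allI)
  have \<sigma>: "0 \<le> \<sigma> x y" "\<sigma> x y = 0 \<longleftrightarrow> x = y" "\<sigma> x y = \<sigma> y x" for x y
    using metric unfolding is_metric_def by blast+
  have "0 < \<sigma> x y" if "0 < b x y" for x y
  proof -
    have "x \<noteq> y" using that b_diag[of x] by auto
    then show ?thesis using \<sigma>(1,2)[of x y] by linarith
  qed
  then show "alt_edge_weight b \<sigma>"
    unfolding alt_edge_weight_def using \<sigma>(1,3) by blast
  show "finite_measure_fn \<mu>" "p_intrinsic b p \<sigma> \<mu>" by (fact \<mu>)+
  fix x r
  have "{y. path_dist b \<sigma> x y \<le> r} \<subseteq> {y. \<sigma> x y \<le> max r 0}"
  proof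
    fix y assume "y \<in> {y. path_dist b \<sigma> x y \<le> r}"
    then have "\<sigma> x y \<le> r" using metric_le_path_dist[OF metric, of x y] by simp
    then show "y \<in> {y. \<sigma> x y \<le> max r 0}" by simp
  qed
  moreover have "finite {y. \<sigma> x y \<le> max r 0}"
    using balls by simp
  ultimately show "finite {y. path_dist b \<sigma> x y \<le> r}"
    by (rule finite_subset)
qed

lemma proper_finite_energy_if_intrinsic_weight:
  assumes w: "alt_edge_weight b w" and \<mu>: "finite_measure_fn \<mu>" "p_intrinsic b p w \<mu>"
    and balls: "\<forall>x r. finite {y. path_dist b w x y \<le> r}"
  shows "\<exists>f\<in>Dp b (\<lambda>_. 0) p. liminf_inf f = \<infinity>"
proof
  fix x0 :: 'x
  have w_nonneg: "0 \<le> w x y" and w_sym: "w x y = w y x" for x y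
    using w by (auto simp: alt_edge_weight_def)
  define f where "f = path_dist b w x0"
  have "\<bar>f x - f y\<bar> \<le> w x y" if "0 < b x y" for x y
  proof -
    have "f y \<le> f x + w x y" "f x \<le> f y + w x y"
      using path_dist_edge[where w = w and z = x0, OF w_nonneg that]
        path_dist_edge[where w = w and z = x0 and x = y and y = x, OF w_nonneg] that
      by (simp_all add: f_def b_sym w_sym)
    then show ?thesis unfolding abs_le_iff by linarith
  qed
  then have "edge_sum b p (\<lambda>x y. \<bar>f x - f y\<bar>) \<le> edge_sum b p w"
    by (intro edge_sum_mono) auto
  also have "\<dots> < \<infinity>"
    using finite_measure_intrinsic_iff_edge_sum[of w] w_nonneg w_sym \<mu> by blast
  finally show "f \<in> Dp b (\<lambda>_. 0) p" by (simp add: Dp_iff_edge_sum)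
  show "liminf_inf f = \<infinity>"
    using balls by (simp add: f_def liminf_inf_eq_infinity_iff)
qed

section \<open>Capacity of the boundary of a compactification\<close>

lemma onorm_nonneg: "0 \<le> onorm b (\<lambda>_. 0) p xo u"
  unfolding onorm_def by (rule powr_ge_zero)

lemma onorm_less:
  assumes "u xo = 0" "E u < ennreal (r powr p)" "0 < r"
  shows "onorm b (\<lambda>_. 0) p xo u < r"
proof -
  have "enn2real (E u) < r powr p"
    using assms(2,3) by (cases "E u") (auto simp: ennreal_less_iff)
  then have "enn2real (E u) powr (1 / p) < (r powr p) powr (1 / p)"
    using p_pos by (intro powr_less_mono2) auto
  then show ?thesis
    using assms(1,3) p_pos by (simp add: onorm_def powr_powr)
qed

lemma onorm_lessD:
  assumes "u \<in> Dp b (\<lambda>_. 0) p" "onorm b (\<lambda>_. 0) p xo u < r"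
  shows "E u < ennreal (r powr p)" "\<bar>u xo\<bar> < r"
proof -
  obtain t where t: "E u = ennreal t" "0 \<le> t"
    using assms(1) unfolding Dp_def by (cases "E u") auto
  have r: "0 < r"
    using onorm_nonneg[of xo u] assms(2) by linarith
  have "(t + \<bar>u xo\<bar> powr p) powr (1 / p) < r"
    using assms(2) t by (simp add: onorm_def)
  then have "((t + \<bar>u xo\<bar> powr p) powr (1 / p)) powr p < r powr p"
    using p_pos by (intro powr_less_mono2) auto
  then have sum_less: "t + \<bar>u xo\<bar> powr p < r powr p"
    using t(2) p_pos by (simp add: powr_powr)
  have "t < r powr p"
    using sum_less powr_ge_zero[of "\<bar>u xo\<bar>" p] by linarith
  then show "E u < ennreal (r powr p)"
    using t r by (simp add: ennreal_lessI)
  have "\<bar>u xo\<bar> powr p < r powr p"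
    using sum_less t(2) by linarith
  with less_imp_le[OF r] show "\<bar>u xo\<bar> < r"
    by (rule powr_less_imp_less[OF p_pos])
qed

lemma edge_diff_less:
  assumes "0 < b x y" "0 < \<epsilon>" "E v < ennreal (b x y * \<epsilon> powr p / 2)"
  shows "\<bar>v x - v y\<bar> < \<epsilon>"
proof (rule powr_less_imp_less[OF p_pos])
  have "ennreal (b x y * \<bar>v x - v y\<bar> powr p / 2) < ennreal (b x y * \<epsilon> powr p / 2)"
    using edge_term_le_energy assms(3) by (rule le_less_trans)
  then have "b x y * \<bar>v x - v y\<bar> powr p / 2 < b x y * \<epsilon> powr p / 2"
    by (rule ennreal_less_iff[THEN iffD1, rotated]) (use b_nonneg in simp)
  then show "\<bar>v x - v y\<bar> powr p < \<epsilon> powr p"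
    using assms(1) by (simp add: divide_strict_right_mono mult_less_cancel_left_pos)
qed (use assms(2) in simp)

lemma small_energy_imp_close:
  "\<forall>\<epsilon>>0. \<exists>\<delta>>0. \<forall>v. E v < ennreal \<delta> \<longrightarrow> \<bar>v x - v y\<bar> < \<epsilon>"
  using connected[of y x]
proof (induction rule: rtranclp_induct)
  case base
  show ?case by (auto intro: exI[of _ 1])
next
  case (step z z')
  show ?case
  proof (intro allI impI)
    fix \<epsilon> :: real assume "0 < \<epsilon>"
    then obtain \<delta> where \<delta>: "0 < \<delta>" "\<And>v. E v < ennreal \<delta> \<Longrightarrow> \<bar>v z - v y\<bar> < \<epsilon> / 2"
      using step.IH by (meson half_gt_zero)
    define \<delta>' where "\<delta>' = min \<delta> (b z z' * (\<epsilon> / 2) powr p / 2)"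
    have "\<bar>v z' - v y\<bar> < \<epsilon>" if "E v < ennreal \<delta>'" for v
    proof -
      have "ennreal \<delta>' \<le> ennreal \<delta>" "ennreal \<delta>' \<le> ennreal (b z z' * (\<epsilon> / 2) powr p / 2)"
        by (simp_all add: \<delta>'_def ennreal_leI)
      then have "E v < ennreal \<delta>" "E v < ennreal (b z z' * (\<epsilon> / 2) powr p / 2)"
        using that by (auto intro: order.strict_trans2)
      then have "\<bar>v z - v y\<bar> < \<epsilon> / 2" "\<bar>v z - v z'\<bar> < \<epsilon> / 2"
        using \<delta>(2) by (blast, intro edge_diff_less step(2)) (use \<open>0 < \<epsilon>\<close> in simp_all)
      then show ?thesis by linarith
    qed
    moreover have "0 < \<delta>'"
      using \<delta>(1) step(2) \<open>0 < \<epsilon>\<close> by (simp add: \<delta>'_def)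
    ultimately show "\<exists>\<delta>>0. \<forall>v. E v < ennreal \<delta> \<longrightarrow> \<bar>v z' - v y\<bar> < \<epsilon>" by blast
  qed
qed

lemma small_energy_imp_close_on_finite:
  assumes "finite K" "0 < \<epsilon>"
  shows "\<exists>\<delta>>0. \<forall>x\<in>K. \<forall>v. E v < ennreal \<delta> \<longrightarrow> \<bar>v x - v y\<bar> < \<epsilon>"
  using assms(1)
proof (induction K rule: finite_induct)
  case empty
  show ?case by (auto intro: exI[of _ 1])
next
  case (insert x K)
  obtain \<delta> where \<delta>: "0 < \<delta>" "\<forall>x\<in>K. \<forall>v. E v < ennreal \<delta> \<longrightarrow> \<bar>v x - v y\<bar> < \<epsilon>"
    using insert.IH by blast
  obtain \<delta>' where \<delta>': "0 < \<delta>'" "\<forall>v. E v < ennreal \<delta>' \<longrightarrow> \<bar>v x - v y\<bar> < \<epsilon>"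
    using small_energy_imp_close[of x y] assms(2) by blast
  have "\<bar>v z - v y\<bar> < \<epsilon>" if "z \<in> insert x K" "E v < ennreal (min \<delta> \<delta>')" for z v
  proof -
    have "ennreal (min \<delta> \<delta>') \<le> ennreal \<delta>" "ennreal (min \<delta> \<delta>') \<le> ennreal \<delta>'"
      by (simp_all add: ennreal_leI)
    then have "E v < ennreal \<delta>" "E v < ennreal \<delta>'"
      using that(2) by (auto intro: less_le_trans)
    then show ?thesis using that(1) \<delta>(2) \<delta>'(2) by auto
  qed
  then show ?case using \<delta>(1) \<delta>'(1) by (intro exI[of _ "min \<delta> \<delta>'"]) auto
qed

lemma capY_boundary_zero_if_p_parabolic:
  assumes cT: "compactification T \<iota>" and par: "p_parabolic b (\<lambda>_. 0) p"
  shows "capY b (\<lambda>_. 0) p xo T \<iota> (boundary T \<iota>) = 0"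
proof -
  have small: "capY b (\<lambda>_. 0) p xo T \<iota> (boundary T \<iota>) \<le> ennreal e" if "0 < e" for e
  proof -
    have "0 < e powr p" using that by simp
    then obtain \<phi> where \<phi>: "finite {x. \<phi> x \<noteq> 0}" "1 \<le> \<phi> xo" "E \<phi> < ennreal (e powr p)"
      using p_parabolicD[OF par, of "{xo}" "e powr p"] by auto
    define F where "F = {x. \<phi> x \<noteq> 0}"
    define u where "u = (\<lambda>x. 1 - min 1 (max 0 (\<phi> x)))"
    define U where "U = topspace T - \<iota> ` F"
    have U: "openin T U" "boundary T \<iota> \<subseteq> U" "\<iota> -` U = - F"
      unfolding U_def using nbhd_boundary_compl_image_finite[OF cT \<phi>(1)]
      by (simp_all add: F_def)
    have "E u \<le> ennreal (1 powr p) * E \<phi>"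
      using energy_scaled_clamp_compl_le[of 1 \<phi>] by (simp add: u_def)
    then have Eu: "E u < ennreal (e powr p)"
      using \<phi>(3) by simp
    then have "u \<in> Dp b (\<lambda>_. 0) p"
      by (simp add: Dp_def order.strict_trans[OF _ ennreal_less_top])
    moreover have "\<forall>x\<in>\<iota> -` U. 1 \<le> u x"
      unfolding U(3) by (simp add: F_def u_def)
    ultimately have "capY b (\<lambda>_. 0) p xo T \<iota> (boundary T \<iota>) \<le> ennreal (onorm b (\<lambda>_. 0) p xo u)"
      using U(1,2) unfolding capY_def capo_def
      by (intro INF_lower2[of U] INF_lower) auto
    also have "\<dots> \<le> ennreal e"
      using onorm_less[of u xo e] \<phi>(2) Eu that by (simp add: u_def)
    finally show ?thesis .
  qed
  have "capY b (\<lambda>_. 0) p xo T \<iota> (boundary T \<iota>) \<le> 0"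
    by (rule ennreal_le_epsilon) (simp add: small)
  then show ?thesis by simp
qed

lemma capY_boundary_zeroD:
  assumes cT: "compactification T \<iota>" and cap: "capY b (\<lambda>_. 0) p xo T \<iota> (boundary T \<iota>) = 0"
    and r: "0 < r"
  shows "\<exists>u. finite {x. u x < 1} \<and> E u < ennreal (r powr p) \<and> \<bar>u xo\<bar> < r"
proof -
  have "capY b (\<lambda>_. 0) p xo T \<iota> (boundary T \<iota>) < ennreal r"
    using cap r by simp
  then obtain U where U: "openin T U" "boundary T \<iota> \<subseteq> U"
      "capo b (\<lambda>_. 0) p xo (\<iota> -` U) < ennreal r"
    unfolding capY_def INF_less_iff by auto
  then obtain u where u: "u \<in> Dp b (\<lambda>_. 0) p" "\<forall>x\<in>\<iota> -` U. 1 \<le> u x"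
      "onorm b (\<lambda>_. 0) p xo u < r"
    unfolding capo_def INF_less_iff using r onorm_nonneg by (auto simp: ennreal_less_iff)
  have "{x. u x < 1} \<subseteq> - (\<iota> -` U)"
    using u(2) by force
  then have "finite {x. u x < 1}"
    using finite_compl_vimage_nbhd_boundary[OF cT U(1,2)] by (rule finite_subset)
  then show ?thesis
    using onorm_lessD[OF u(1,3)] by blast
qed

lemma p_parabolic_if_capY_boundary_zero:
  assumes cT: "compactification T \<iota>" and cap: "capY b (\<lambda>_. 0) p xo T \<iota> (boundary T \<iota>) = 0"
  shows "p_parabolic b (\<lambda>_. 0) p"
proof (rule p_parabolicI)
  fix K :: "'x set" and e :: real assume K: "finite K" and e: "0 < e"
  obtain d where d: "0 < d" "\<forall>x\<in>K. \<forall>v. E v < ennreal d \<longrightarrow> \<bar>v x - v xo\<bar> < 1/4"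
    using small_energy_imp_close_on_finite[OF K, of "1/4" xo] by auto
  define r where "r = min (1/4) (min d (e / 2 powr p) powr (1 / p))"
  have "0 < min d (e / 2 powr p)"
    using d e by simp
  then have "0 < min d (e / 2 powr p) powr (1 / p)"
    by (subst powr_gt_zero) linarith
  then have r: "0 < r" "r \<le> 1/4"
    by (simp_all add: r_def)
  have "r powr p \<le> (min d (e / 2 powr p) powr (1 / p)) powr p"
    using r p_pos by (intro powr_mono2) (auto simp: r_def)
  also have "\<dots> = min d (e / 2 powr p)"
    using d e p_pos by (simp add: powr_powr)
  finally have rp: "ennreal (r powr p) \<le> ennreal d" "ennreal (r powr p) \<le> ennreal (e / 2 powr p)"
    by (simp_all add: ennreal_leI)
  obtain u where u: "finite {x. u x < 1}" "E u < ennreal (r powr p)" "\<bar>u xo\<bar> < r"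
    using capY_boundary_zeroD[OF cT cap r(1)] by blast
  define v where "v x = 2 - 2 * u x" for x
  have "E v \<le> ennreal (2 powr p) * E u"
    by (rule energy_contraction) (auto simp: v_def abs_if)
  also have "\<dots> < ennreal (2 powr p) * ennreal (e / 2 powr p)"
    using u(2) rp(2) by (intro ennreal_mult_strict_left_mono) auto
  also have "\<dots> = ennreal e"
    using e by (simp flip: ennreal_mult')
  finally have "E v < ennreal e" .
  moreover have "\<forall>x\<in>K. 1 \<le> v x"
  proof
    fix x assume "x \<in> K"
    have "\<bar>u x - u xo\<bar> < 1/4"
      using d(2) \<open>x \<in> K\<close> u(2) rp(1) by (meson order.strict_trans2)
    then show "1 \<le> v x" using u(3) r(2) unfolding v_def abs_less_iff by linarith
  qed
  moreover have "{x. 0 < v x} = {x. u x < 1}"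
    by (auto simp: v_def)
  ultimately show "\<exists>v. E v < ennreal e \<and> (\<forall>x\<in>K. 1 \<le> v x) \<and> finite {x. 0 < v x}"
    using u(1) by auto
qed

end

theorem proposition3p15:
  fixes b :: "'x \<Rightarrow> 'x \<Rightarrow> real" and m c :: "'x \<Rightarrow> real" and p :: real and xo :: 'x
  assumes "weighted_graph b m c"
    and "c = (\<lambda>_. 0)"
    and "p \<ge> 1"
  shows
   "(\<forall>(T :: 'y topology) \<iota>. compactification T \<iota> \<longrightarrow>
        (p_parabolic b c p \<longleftrightarrow> capY b c p xo T \<iota> (boundary T \<iota>) = 0))
    \<and> (p_parabolic b c p \<longleftrightarrow> (\<exists>f \<in> Dp b c p. liminf_inf f = \<infinity>))
    \<and> (p_parabolic b c p \<longleftrightarrow>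
         (\<exists>\<sigma> \<mu>. is_metric \<sigma> \<and> finite_measure_fn \<mu> \<and> p_intrinsic b p \<sigma> \<mu> \<and>
            induces_discrete \<sigma> \<and> (\<forall>x r. r \<ge> 0 \<longrightarrow> finite {y. \<sigma> x y \<le> r})))
    \<and> (p_parabolic b c p \<longleftrightarrow>
         (\<exists>w \<mu>. alt_edge_weight b w \<and> finite_measure_fn \<mu> \<and> p_intrinsic b p w \<mu> \<and>
            (\<forall>x r. finite {y. path_dist b w x y \<le> r})))"
proof -
  interpret graph_without_killing b p
    using assms(1,3) unfolding weighted_graph_def by unfold_locales auto
  let ?iii = "\<exists>f \<in> Dp b (\<lambda>_. 0) p. liminf_inf f = \<infinity>"
  let ?iv = "\<exists>\<sigma> \<mu>. is_metric \<sigma> \<and> finite_measure_fn \<mu> \<and> p_intrinsic b p \<sigma> \<mu> \<and>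
    induces_discrete \<sigma> \<and> (\<forall>x r. r \<ge> 0 \<longrightarrow> finite {y. \<sigma> x y \<le> r})"
  let ?v = "\<exists>w \<mu>. alt_edge_weight b w \<and> finite_measure_fn \<mu> \<and> p_intrinsic b p w \<mu> \<and>
    (\<forall>x r. finite {y. path_dist b w x y \<le> r})"
  have "p_parabolic b (\<lambda>_. 0) p \<longleftrightarrow> capY b (\<lambda>_. 0) p xo T \<iota> (boundary T \<iota>) = 0"
    if "compactification T \<iota>" for T :: "'y topology" and \<iota>
    using that capY_boundary_zero_if_p_parabolic p_parabolic_if_capY_boundary_zero by blast
  moreover have "p_parabolic b (\<lambda>_. 0) p \<longleftrightarrow> ?iii"
    using proper_finite_energy_if_p_parabolic p_parabolic_if_proper_finite_energy by blast
  moreover have "?iii \<Longrightarrow> ?iv"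
    using intrinsic_metric_if_proper_finite_energy by blast
  moreover have "?iv \<Longrightarrow> ?v"
    using intrinsic_weight_if_intrinsic_metric by blast
  moreover have "?v \<Longrightarrow> ?iii"
    using proper_finite_energy_if_intrinsic_weight by blast
  ultimately show ?thesis
    unfolding assms(2) by blast
qed

end
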